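(* There exists an $F_\sigma$ set $E\subseteq\mathbb{R}$ having strong uniform density type (SUDT) such that for every $G_\delta$ set $\widetilde{E}\subseteq\mathbb{R}$ with $|E\,\triangle\,\widetilde{E}|=0$, the set $\widetilde{E}$ does not have uniform density type (UDT).
   Context: $|A|$ denotes Lebesgue measure. For a measurable $E\subseteq\mathbb{R}$ and $\gamma,\delta>0$ let $E^{\gamma,\delta}=\{x\in\mathbb{R} : \forall r\in(0,\delta],\ \max\{|(x-r,x)\cap E|/r,\ |(x,x+r)\cap E|/r\}\ge\gamma\}$. A measurable set $E$ has uniform density type (UDT) if there exist sequences $\gamma_n\nearrow 1$ and $\delta_n\searrow 0$ (positive) such that $E\subseteq\bigcap_{k=1}^\infty\bigcup_{n=k}^\infty E^{\gamma_n,\delta_n}$. It has strong uniform density type (SUDT) if there exist sequences $\gamma_n\nearrow 1$ and $\delta_n\searrow 0$ such that $E\subseteq\bigcup_{k=1}^\infty\bigcap_{n=k}^\infty E^{\gamma_n,\delta_n}$. *)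

theory Defs
  imports "HOL-Analysis.Analysis"
begin

definition dens_set :: "real set \<Rightarrow> real \<Rightarrow> real \<Rightarrow> real set" where
  "dens_set E \<gamma> \<delta> = {x. \<forall>r\<in>{0<..\<delta>}.
      max (measure lebesgue ({x - r<..<x} \<inter> E) / r) (measure lebesgue ({x<..<x + r} \<inter> E) / r) \<ge> \<gamma>}"

definition admissible_seqs :: "(nat \<Rightarrow> real) \<Rightarrow> (nat \<Rightarrow> real) \<Rightarrow> bool" where
  "admissible_seqs \<gamma> \<delta> \<longleftrightarrow>
     (\<forall>n. \<gamma> n > 0) \<and> incseq \<gamma> \<and> \<gamma> \<longlonglongrightarrow> 1 \<and>
     (\<forall>n. \<delta> n > 0) \<and> decseq \<delta> \<and> \<delta> \<longlonglongrightarrow> 0"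

definition UDT :: "real set \<Rightarrow> bool" where
  "UDT E \<longleftrightarrow> E \<in> sets lebesgue \<and> (\<exists>\<gamma> \<delta>. admissible_seqs \<gamma> \<delta> \<and>
      E \<subseteq> (\<Inter>k. \<Union>n\<in>{k..}. dens_set E (\<gamma> n) (\<delta> n)))"

definition SUDT :: "real set \<Rightarrow> bool" where
  "SUDT E \<longleftrightarrow> E \<in> sets lebesgue \<and> (\<exists>\<gamma> \<delta>. admissible_seqs \<gamma> \<delta> \<and>
      E \<subseteq> (\<Union>k. \<Inter>n\<in>{k..}. dens_set E (\<gamma> n) (\<delta> n)))"

end

theory Submission
  imports Defs
begin

text \<open>
  The set \<open>cantor_like t s\<close> removes from \<open>\<real>\<close>, for every level \<open>j\<close>, tiny open gaps of
  radius \<open>s * 2^-((j+2)^2)\<close> around the points of the lattice \<open>t + s * 2^-(j^2+3j) * \<int>\<close>.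
  Measured in the mesh of level \<open>J\<close>, all gap endpoints of levels at most \<open>J\<close> are almost
  integers, so at each point of the set one of the two sides of length about that mesh
  meets no gap of level at most \<open>J\<close>; the deeper levels are so sparse that this side
  lies in the set up to a proportion \<open>2^-J\<close>. A countable union \<open>E\<close> of closed, scaled
  copies of such sets, placed at the odd multiples of \<open>2^-(L+1)\<close> for every \<open>L\<close>,
  therefore has SUDT.

  On the other hand \<open>E\<close> has positive measure in every interval, while at every dyadic
  rational it has density at most \<open>1/2\<close> at small scales: the coarse pieces keep away
  from it and the fine ones are sparse around it. A \<open>G\<^sub>\<delta>\<close> set equal to \<open>E\<close> up to a null set
  is thus a dense \<open>G\<^sub>\<delta>\<close>, and by Baire's theorem it contains a point at which both
  one-sided density ratios drop below \<open>3/4\<close> at arbitrarily small scales, so it is not UDT.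
\<close>

section \<open>One-sided density ratios and Baire category\<close>

definition side_ratio :: "real set \<Rightarrow> real \<Rightarrow> real \<Rightarrow> real" where
  "side_ratio E x r =
     max (measure lebesgue ({x - r<..<x} \<inter> E) / r) (measure lebesgue ({x<..<x + r} \<inter> E) / r)"

lemma dens_set_side_ratio: "dens_set E \<gamma> \<delta> = {x. \<forall>r\<in>{0<..\<delta>}. \<gamma> \<le> side_ratio E x r}"
  by (simp add: dens_set_def side_ratio_def)

lemma side_ratio_cong_null:
  assumes E: "E \<in> sets lebesgue" and E': "E' \<in> sets lebesgue"
    and null: "emeasure lebesgue ((E - E') \<union> (E' - E)) = 0"
  shows "side_ratio E' = side_ratio E"
proof -
  have "AE x in lebesgue. x \<notin> (E - E') \<union> (E' - E)"
    using E E' null by (intro AE_not_in) (auto simp: null_sets_def)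
  then have "measure lebesgue (A \<inter> E') = measure lebesgue (A \<inter> E)" if "A \<in> sets lebesgue" for A
    using that E E' by (intro measure_eq_AE) auto
  then show ?thesis
    by (simp add: side_ratio_def fun_eq_iff)
qed

lemma measure_interval_Int_le:
  assumes E: "E \<in> sets lebesgue"
  shows "measure lebesgue ({a<..<b} \<inter> E)
           \<le> measure lebesgue ({a'<..<b'} \<inter> E) + \<bar>a - a'\<bar> + \<bar>b - b'\<bar>"
proof -
  define A where "A = {a'<..<b'} \<inter> E"
  define I where "I = {min a a' .. max a a'}"
  define J where "J = {min b b' .. max b b'}"
  have A: "A \<in> lmeasurable"
    unfolding A_def using E by (intro fmeasurableI2[OF lmeasurable_interval(2)]) auto
  have "measure lebesgue ({a<..<b} \<inter> E) \<le> measure lebesgue (A \<union> I \<union> J)"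
    using E A by (intro measure_mono_fmeasurable) (auto simp: A_def I_def J_def)
  also have "\<dots> \<le> measure lebesgue A + measure lebesgue I + measure lebesgue J"
    using A by (intro order.trans[OF measure_Un_le] add_right_mono measure_Un_le)
      (auto simp: I_def J_def)
  also have "\<dots> = measure lebesgue A + \<bar>a - a'\<bar> + \<bar>b - b'\<bar>"
    by (simp add: I_def J_def abs_if max_def min_def)
  finally show ?thesis by (simp add: A_def)
qed

lemma side_ratio_lipschitz:
  assumes E: "E \<in> sets lebesgue" and r: "r > 0"
  shows "side_ratio E y r \<le> side_ratio E x r + 2 * \<bar>y - x\<bar> / r"
proof -
  have "measure lebesgue ({y - r<..<y} \<inter> E) \<le> measure lebesgue ({x - r<..<x} \<inter> E) + 2 * \<bar>y - x\<bar>"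
       "measure lebesgue ({y<..<y + r} \<inter> E) \<le> measure lebesgue ({x<..<x + r} \<inter> E) + 2 * \<bar>y - x\<bar>"
    using measure_interval_Int_le[OF E, of "y - r" y "x - r" x]
      measure_interval_Int_le[OF E, of y "y + r" x "x + r"] by simp_all
  then have "measure lebesgue ({y - r<..<y} \<inter> E) / r \<le> measure lebesgue ({x - r<..<x} \<inter> E) / r + 2 * \<bar>y - x\<bar> / r"
       "measure lebesgue ({y<..<y + r} \<inter> E) / r \<le> measure lebesgue ({x<..<x + r} \<inter> E) / r + 2 * \<bar>y - x\<bar> / r"
    using r by (auto simp flip: add_divide_distrib intro: divide_right_mono)
  then show ?thesis
    unfolding side_ratio_def by linarith
qed

definition low_density_points :: "real set \<Rightarrow> nat \<Rightarrow> real set" where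
  "low_density_points E k = {x. \<exists>r. 0 < r \<and> r < 1 / Suc k \<and> side_ratio E x r < 3/4}"

lemma open_low_density_points:
  assumes E: "E \<in> sets lebesgue"
  shows "open (low_density_points E k)"
  unfolding open_dist
proof (intro ballI)
  fix x assume "x \<in> low_density_points E k"
  then obtain r where r: "0 < r" "r < 1 / Suc k" "side_ratio E x r < 3/4"
    by (auto simp: low_density_points_def)
  define e where "e = (3/4 - side_ratio E x r) * r / 2"
  have "side_ratio E y r < 3/4" if "dist y x < e" for y
  proof -
    have "2 * \<bar>y - x\<bar> / r < 2 * e / r"
      using that r(1) by (simp add: dist_real_def divide_strict_right_mono)
    also have "\<dots> = 3/4 - side_ratio E x r"
      using r(1) by (simp add: e_def)
    finally show ?thesis
      using side_ratio_lipschitz[OF E r(1), of y x] by linarith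
  qed
  moreover have "e > 0" using r by (simp add: e_def)
  ultimately show "\<exists>e>0. \<forall>y. dist y x < e \<longrightarrow> y \<in> low_density_points E k"
    using r by (auto simp: low_density_points_def)
qed

lemma UDT_imp_not_in_all_low_density_points:
  assumes "UDT E" "x \<in> E"
  shows "\<exists>k. x \<notin> low_density_points E k"
proof -
  obtain \<gamma> \<delta> where adm: "admissible_seqs \<gamma> \<delta>"
    and cover: "E \<subseteq> (\<Inter>k. \<Union>n\<in>{k..}. dens_set E (\<gamma> n) (\<delta> n))"
    using assms(1) by (auto simp: UDT_def)
  have "\<forall>\<^sub>F n in sequentially. 3/4 < \<gamma> n"
    using adm by (intro order_tendstoD(1)) (auto simp: admissible_seqs_def)
  then obtain n0 where n0: "\<And>n. n \<ge> n0 \<Longrightarrow> 3/4 < \<gamma> n"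
    by (auto simp: eventually_sequentially)
  from cover assms(2) obtain n where n: "n \<ge> n0" "x \<in> dens_set E (\<gamma> n) (\<delta> n)"
    by blast
  obtain k where k: "inverse (real (Suc k)) < \<delta> n"
    using adm reals_Archimedean[of "\<delta> n"] by (auto simp: admissible_seqs_def)
  have "x \<notin> low_density_points E k"
  proof
    assume "x \<in> low_density_points E k"
    then obtain r where "0 < r" "r < 1 / Suc k" "side_ratio E x r < 3/4"
      by (auto simp: low_density_points_def)
    moreover have "r \<le> \<delta> n"
      using k \<open>r < 1 / Suc k\<close> by (simp add: inverse_eq_divide)
    ultimately show False
      using n n0 by (force simp: dens_set_side_ratio)
  qed
  then show ?thesis ..
qed

lemma closure_eq_UNIV_if_meets_intervals:
  assumes "\<And>a b. a < b \<Longrightarrow> \<exists>x\<in>S. a < x \<and> x < (b::real)"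
  shows "closure S = UNIV"
proof -
  have "\<exists>y\<in>S. dist y x < e" if "e > 0" for x e
    using assms[of "x - e" "x + e"] that by (force simp: dist_real_def abs_less_iff)
  then show ?thesis
    by (auto simp: closure_approachable)
qed

lemma dense_gdelta_Int_dense_opens_nonempty:
  fixes D :: "'a::{real_normed_vector,heine_borel} set" and S :: "nat \<Rightarrow> 'a set"
  assumes D: "gdelta_in euclidean D" "closure D = UNIV"
    and S: "\<And>k. open (S k)" "\<And>k. closure (S k) = UNIV"
  shows "D \<inter> (\<Inter>k. S k) \<noteq> {}"
proof -
  obtain T where T: "countable T" "\<And>U. U \<in> T \<Longrightarrow> open U" "\<Inter>T = D"
    using D(1) unfolding gdelta_in_alt intersection_of_def by auto
  have "UNIV \<subseteq> closure (\<Inter>(range S \<union> T))"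
  proof (rule Baire[OF closed_UNIV])
    show "countable (range S \<union> T)" using T(1) by simp
    fix U assume "U \<in> range S \<union> T"
    moreover have "closure U = UNIV" if "U \<in> T"
      using closure_mono[of D U] T(3) D(2) that by auto
    ultimately show "openin (top_of_set UNIV) U \<and> UNIV \<subseteq> closure U"
      using S T(2) by auto
  qed
  then have "\<Inter>(range S \<union> T) \<noteq> {}" by auto
  then show ?thesis
    using T(3) by (simp add: Inter_Un_distrib Int_commute)
qed

lemma low_density_points_dense:
  assumes E: "E \<in> sets lebesgue"
    and holes: "\<And>a b. a < b \<Longrightarrow> \<exists>d\<in>{a<..<b}. \<exists>r0>0. \<forall>r\<in>{0<..r0}.
                  measure lebesgue (E \<inter> {d - r<..<d + r}) \<le> r / 2"
  shows "closure (low_density_points E k) = UNIV"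
proof (rule closure_eq_UNIV_if_meets_intervals)
  fix a b :: real assume "a < b"
  then obtain d r0 where d: "a < d" "d < b" and r0: "r0 > 0"
    and small: "\<And>r. r \<in> {0<..r0} \<Longrightarrow> measure lebesgue (E \<inter> {d - r<..<d + r}) \<le> r / 2"
    using holes by force
  define r where "r = min r0 (1 / (2 * Suc k))"
  have r: "0 < r" "r \<le> r0" "r < 1 / Suc k"
    using r0 by (auto simp: r_def min_less_iff_disj divide_strict_left_mono)
  have W: "E \<inter> {d - r<..<d + r} \<in> lmeasurable"
    using E by (intro fmeasurableI2[OF lmeasurable_interval(2)]) auto
  have "measure lebesgue ({d - r<..<d} \<inter> E) \<le> measure lebesgue (E \<inter> {d - r<..<d + r})"
       "measure lebesgue ({d<..<d + r} \<inter> E) \<le> measure lebesgue (E \<inter> {d - r<..<d + r})"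
    using E by (auto intro!: measure_mono_fmeasurable[OF _ _ W])
  moreover have "measure lebesgue (E \<inter> {d - r<..<d + r}) \<le> r / 2"
    using small r by simp
  ultimately have "side_ratio E d r \<le> 1/2"
    using r(1) unfolding side_ratio_def max.bounded_iff by (simp add: divide_le_eq)
  then have "d \<in> low_density_points E k"
    using r by (auto simp: low_density_points_def)
  then show "\<exists>x\<in>low_density_points E k. a < x \<and> x < b"
    using d by blast
qed

theorem not_UDT_if_dense_holes:
  assumes E: "E \<in> sets lebesgue"
    and pos: "\<And>a b. a < b \<Longrightarrow> 0 < measure lebesgue (E \<inter> {a<..<b})"
    and holes: "\<And>a b. a < b \<Longrightarrow> \<exists>d\<in>{a<..<b}. \<exists>r0>0. \<forall>r\<in>{0<..r0}.
                  measure lebesgue (E \<inter> {d - r<..<d + r}) \<le> r / 2"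
    and G: "gdelta_in euclideanreal E'"
    and null: "emeasure lebesgue ((E - E') \<union> (E' - E)) = 0"
  shows "\<not> UDT E'"
proof
  assume U: "UDT E'"
  then have E': "E' \<in> sets lebesgue" by (simp add: UDT_def)
  have "\<exists>x\<in>E'. a < x \<and> x < b" if "a < b" for a b
  proof (rule ccontr)
    assume "\<not> ?thesis"
    then have "E \<inter> {a<..<b} \<subseteq> (E - E') \<union> (E' - E)" by auto
    then have "emeasure lebesgue (E \<inter> {a<..<b}) = 0"
      using null E E' emeasure_mono[of "E \<inter> {a<..<b}" "(E - E') \<union> (E' - E)" lebesgue] by auto
    then show False
      using pos[OF that] by (simp add: measure_def)
  qed
  then have "closure E' = UNIV" by (rule closure_eq_UNIV_if_meets_intervals)
  moreover have "low_density_points E' = low_density_points E"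
    using side_ratio_cong_null[OF E E' null] by (simp add: low_density_points_def[abs_def])
  ultimately obtain x where "x \<in> E'" "\<And>k. x \<in> low_density_points E' k"
    using dense_gdelta_Int_dense_opens_nonempty[OF G _ open_low_density_points[OF E]
      low_density_points_dense[OF E holes], of "\<lambda>k. k"] by auto
  then show False
    using UDT_imp_not_in_all_low_density_points[OF U] by blast
qed

section \<open>Sets with one-sided density one at every point\<close>

lemma measure_UN_geometric_le:
  fixes A :: "nat \<Rightarrow> 'a set"
  assumes A: "\<And>i. A i \<in> fmeasurable M" and le: "\<And>i. measure M (A i) \<le> c * (1/2)^i"
  shows "measure M (\<Union>i. A i) \<le> 2 * c"
proof (rule measure_countable_Union_le[OF A])
  fix n
  have c: "c \<ge> 0"
    using order_trans[OF measure_nonneg le[of 0]] by simp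
  have "(\<Sum>i\<le>n. (1/2::real)^i) \<le> (\<Sum>i. (1/2)^i)"
    by (intro sum_le_suminf) auto
  also have "\<dots> = 2"
    by (simp add: suminf_geometric)
  finally have geo: "(\<Sum>i\<le>n. (1/2::real)^i) \<le> 2" .
  have "measure M (\<Union>i\<le>n. A i) \<le> (\<Sum>i\<le>n. measure M (A i))"
    using A by (intro measure_UNION_le) auto
  also have "\<dots> \<le> (\<Sum>i\<le>n. c * (1/2)^i)"
    by (intro sum_mono le)
  also have "\<dots> \<le> c * 2"
    using mult_left_mono[OF geo c] by (simp add: sum_distrib_left)
  finally show "measure M (\<Union>i\<le>n. A i) \<le> 2 * c"
    by simp
qed

lemma card_Icc_ceiling_floor_le:
  assumes "lo \<le> hi"
  shows "real (card {\<lceil>lo\<rceil>..\<lfloor>hi\<rfloor>}) \<le> hi - lo + 1"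
proof -
  have "real_of_int \<lceil>lo\<rceil> < of_int (\<lfloor>hi\<rfloor> + 2)"
    using assms ceiling_correct[of lo] floor_correct[of hi] by simp linarith
  then have "\<lfloor>hi\<rfloor> - \<lceil>lo\<rceil> + 1 \<ge> 0"
    by linarith
  then show ?thesis
    using of_int_floor_le[of hi] le_of_int_ceiling[of lo] by simp linarith
qed

lemma measure_Int_lattice_union_le:
  fixes S :: "int \<Rightarrow> real set"
  assumes p: "p > 0" and w: "w \<ge> 0" and ab: "a \<le> b"
    and sub: "\<And>k. S k \<subseteq> {t + k * p - w .. t + k * p + w}"
    and meas: "\<And>k. S k \<in> sets lebesgue"
  shows "measure lebesgue ({a<..<b} \<inter> (\<Union>k. S k)) \<le> ((b - a + 2 * w) / p + 1) * (2 * w)"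
proof -
  define lo where "lo = (a - w - t) / p"
  define hi where "hi = (b + w - t) / p"
  define F where "F = {\<lceil>lo\<rceil>..\<lfloor>hi\<rfloor>}"
  have S: "S k \<in> lmeasurable" for k
    by (rule fmeasurableI2[OF lmeasurable_interval(1) sub meas])
  have "{a<..<b} \<inter> (\<Union>k. S k) \<subseteq> (\<Union>k\<in>F. S k)"
  proof
    fix y assume "y \<in> {a<..<b} \<inter> (\<Union>k. S k)"
    then obtain k where y: "a < y" "y < b" "y \<in> S k" by auto
    then have "a - w - t < k * p" "k * p < b + w - t"
      using sub[of k] by auto
    then have "lo < k" "k < hi"
      using p by (auto simp: lo_def hi_def field_simps)
    then show "y \<in> (\<Union>k\<in>F. S k)"
      using y by (auto simp: F_def ceiling_le_iff le_floor_iff intro: less_imp_le)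
  qed
  then have "measure lebesgue ({a<..<b} \<inter> (\<Union>k. S k)) \<le> measure lebesgue (\<Union>k\<in>F. S k)"
    using meas S by (intro measure_mono_fmeasurable) (auto simp: F_def)
  also have "\<dots> \<le> (\<Sum>k\<in>F. measure lebesgue (S k))"
    using meas by (intro measure_UNION_le) (auto simp: F_def)
  also have "\<dots> \<le> (\<Sum>k\<in>F. 2 * w)"
    using w by (intro sum_mono order.trans[OF measure_mono_fmeasurable[OF sub meas]]) auto
  also have "\<dots> = real (card F) * (2 * w)"
    by simp
  also have "\<dots> \<le> ((b - a + 2 * w) / p + 1) * (2 * w)"
  proof (rule mult_right_mono)
    have "lo \<le> hi"
      using ab w p by (simp add: lo_def hi_def divide_right_mono)
    then have "real (card F) \<le> hi - lo + 1"
      unfolding F_def by (rule card_Icc_ceiling_floor_le)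
    also have "\<dots> = (b - a + 2 * w) / p + 1"
      using p by (simp add: lo_def hi_def field_simps)
    finally show "real (card F) \<le> (b - a + 2 * w) / p + 1" .
  qed (use w in simp)
  finally show ?thesis .
qed

lemma measure_interval_Int_ratio_ge:
  assumes E: "E \<in> sets lebesgue" and r: "r > 0"
    and small: "measure lebesgue ({a<..<a + r} - E) \<le> q * r"
  shows "1 - q \<le> measure lebesgue ({a<..<a + r} \<inter> E) / r"
proof -
  have "measure lebesgue ({a<..<a + r} - E) = measure lebesgue ({a<..<a + r} - {a<..<a + r} \<inter> E)"
    by (rule arg_cong[where f = "measure lebesgue"]) auto
  also have "\<dots> = r - measure lebesgue ({a<..<a + r} \<inter> E)"
    using E r by (subst measurable_measure_Diff) auto
  finally show ?thesis
    using small r by (simp add: field_simps)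
qed

text \<open>Since \<open>gap_radius j / lattice_step j = 2^-(j+4)\<close>, level \<open>j\<close> of \<open>gaps\<close> covers a proportion
  of about \<open>2^-(j+3)\<close> of every long interval.\<close>
definition lattice_step :: "nat \<Rightarrow> real" where
  "lattice_step j = (1/2)^(j * j + 3 * j)"

definition gap_radius :: "nat \<Rightarrow> real" where
  "gap_radius j = (1/2)^((j + 2)^2)"

definition gaps :: "real \<Rightarrow> real \<Rightarrow> nat \<Rightarrow> real set" where
  "gaps t s j = (\<Union>k::int. {t + k * (s * lattice_step j) - s * gap_radius j <..<
                            t + k * (s * lattice_step j) + s * gap_radius j})"

definition cantor_like :: "real \<Rightarrow> real \<Rightarrow> real set" where
  "cantor_like t s =
     {x. \<forall>j. \<forall>k::int. s * gap_radius j \<le> \<bar>x - (t + k * (s * lattice_step j))\<bar>}"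

lemma lattice_step_pos: "0 < lattice_step j"
  by (simp add: lattice_step_def)

lemma gap_radius_pos: "0 < gap_radius j"
  by (simp add: gap_radius_def)

lemma gap_radius_eq: "gap_radius j = lattice_step j * (1/2)^(j + 4)"
proof -
  have "(j + 2)^2 = (j * j + 3 * j) + (j + 4)"
    by (simp add: power2_eq_square algebra_simps)
  then show ?thesis
    by (simp add: gap_radius_def lattice_step_def flip: power_add)
qed

lemma half_power_add_4_le: "(1/2::real)^(j + 4) \<le> 1/16"
proof -
  have "(1/2::real)^(j + 4) \<le> (1/2)^4"
    by (rule power_decreasing) auto
  then show ?thesis
    by (simp add: power_one_over)
qed

lemma gap_radius_add_le: "gap_radius (j + i) \<le> gap_radius j * (1/2)^i"
proof -
  have "(j + 2)^2 + i \<le> (j + i + 2)^2"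
    by (simp add: power2_eq_square algebra_simps)
  then have "(1/2::real)^((j + i + 2)^2) \<le> (1/2)^((j + 2)^2 + i)"
    by (intro power_decreasing) auto
  then show ?thesis
    by (simp add: gap_radius_def power_add)
qed

lemma lattice_step_antimono: "j \<le> m \<Longrightarrow> lattice_step m \<le> lattice_step j"
  unfolding lattice_step_def by (intro power_decreasing add_mono mult_le_mono) auto

lemma lattice_step_le: "lattice_step j \<le> (1/2)^j"
  unfolding lattice_step_def by (intro power_decreasing) auto

lemma half_power_div_Ints:
  assumes "a \<le> b"
  shows "(1/2::real)^a / (1/2)^b \<in> \<int>"
proof -
  have "(1/2::real)^a / (1/2)^b = 2^(b - a)"
    using power_diff[of "2::real" a b] assms by (simp add: power_one_over)
  then show ?thesis
    by (metis Ints_numeral Ints_power)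
qed

lemma lattice_step_div_Ints: "j \<le> m \<Longrightarrow> lattice_step j / lattice_step m \<in> \<int>"
  unfolding lattice_step_def by (intro half_power_div_Ints add_mono mult_le_mono) auto

lemma gap_radius_div_Ints:
  assumes "j < m"
  shows "gap_radius j / lattice_step m \<in> \<int>"
proof -
  have "(j + 2)^2 \<le> Suc j * Suc j + 3 * Suc j"
    by (simp add: power2_eq_square)
  also have "\<dots> \<le> m * m + 3 * m"
    using assms by (intro add_mono mult_le_mono) auto
  finally show ?thesis
    unfolding gap_radius_def lattice_step_def by (rule half_power_div_Ints)
qed

lemma open_gaps: "open (gaps t s j)"
  by (auto simp: gaps_def)

lemma mem_gaps_iff:
  "x \<in> gaps t s j \<longleftrightarrow> (\<exists>k::int. \<bar>x - (t + k * (s * lattice_step j))\<bar> < s * gap_radius j)"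
  unfolding gaps_def abs_less_iff by (auto simp: algebra_simps)

lemma cantor_like_eq: "cantor_like t s = - (\<Union>j. gaps t s j)"
  by (auto simp: cantor_like_def mem_gaps_iff not_less; meson not_less)

lemma closed_cantor_like: "closed (cantor_like t s)"
  unfolding cantor_like_eq by (intro closed_Compl open_UN) (auto simp: open_gaps)

lemma cantor_like_sets: "cantor_like t s \<in> sets lebesgue"
  using closed_cantor_like by simp

lemma measure_gaps_le:
  assumes s: "s > 0" and ab: "a \<le> b"
  shows "measure lebesgue ({a<..<b} \<inter> gaps t s j) \<le> (b - a) * (1/2)^(j + 3) + 3 * s * gap_radius j"
proof -
  define q :: real where "q = (1/2)^(j + 4)"
  have q: "gap_radius j = lattice_step j * q" "4 * q \<le> 1" "2 * q = (1/2)^(j + 3)"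
    using half_power_add_4_le[of j] by (simp_all add: q_def gap_radius_eq, simp add: power_add power_one_over)
  have "measure lebesgue ({a<..<b} \<inter> gaps t s j)
          \<le> ((b - a + 2 * (s * gap_radius j)) / (s * lattice_step j) + 1) * (2 * (s * gap_radius j))"
    unfolding gaps_def using s ab lattice_step_pos[of j] gap_radius_pos[of j]
    by (intro measure_Int_lattice_union_le[where t = t]) auto
  also have "\<dots> = (b - a) * (2 * q) + (4 * q + 2) * (s * gap_radius j)"
    using s lattice_step_pos[of j] by (simp add: q(1) field_simps)
  also have "\<dots> \<le> (b - a) * (1/2)^(j + 3) + 3 * s * gap_radius j"
    using q s gap_radius_pos[of j] by (simp add: mult_right_mono)
  finally show ?thesis .
qed

lemma measure_gaps_from_le:
  assumes s: "s > 0" and ab: "a \<le> b"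
  shows "measure lebesgue ({a<..<b} \<inter> (\<Union>i. gaps t s (J + i)))
           \<le> (b - a) * (1/2)^(J + 2) + 6 * s * gap_radius J"
proof -
  have "measure lebesgue ({a<..<b} \<inter> gaps t s (J + i))
          \<le> ((b - a) * (1/2)^(J + 3) + 3 * s * gap_radius J) * (1/2)^i" for i
  proof -
    have "3 * s * gap_radius (J + i) \<le> 3 * s * gap_radius J * (1/2)^i"
      using gap_radius_add_le[of J i] s by simp
    then show ?thesis
      using measure_gaps_le[OF s ab, of t "J + i"] by (simp add: algebra_simps power_add)
  qed
  then have "measure lebesgue (\<Union>i. {a<..<b} \<inter> gaps t s (J + i))
               \<le> 2 * ((b - a) * (1/2)^(J + 3) + 3 * s * gap_radius J)"
    by (intro measure_UN_geometric_le fmeasurableI2[OF lmeasurable_interval(2)])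
      (auto simp: open_gaps)
  then show ?thesis
    by (simp add: power_add field_simps)
qed

text \<open>Divided by \<open>lattice_step m\<close>, every gap endpoint of level at most \<open>m\<close> is an integer
  up to the shift \<open>2^-(m+4)\<close> contributed by a gap of level exactly \<open>m\<close>.\<close>
lemma gap_ends_apart:
  fixes k1 k2 :: int
  assumes m: "j1 \<le> m" "j2 \<le> m" "j1 = m \<or> j2 = m"
  defines "U \<equiv> (k2 * lattice_step j2 - gap_radius j2) - (k1 * lattice_step j1 + gap_radius j1)"
  shows "U < 0 \<or> lattice_step m / 2 \<le> U"
proof (rule ccontr)
  assume "\<not> ?thesis"
  then have U: "0 \<le> U" "U < lattice_step m / 2" by auto
  define h where "h = lattice_step m"
  define f :: "nat \<Rightarrow> real" where "f j = (if j = m then (1/2)^(m + 4) else 0)" for j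
  have h: "h > 0" by (simp add: h_def lattice_step_pos)
  have frac: "gap_radius j / h - f j \<in> \<int>" if "j \<le> m" for j
    using that gap_radius_div_Ints[of j m] lattice_step_pos[of m]
    by (cases "j = m") (auto simp: f_def h_def gap_radius_eq)
  have "U / h + (f j1 + f j2) = k2 * (lattice_step j2 / h) - k1 * (lattice_step j1 / h)
          - (gap_radius j2 / h - f j2) - (gap_radius j1 / h - f j1)"
    using h by (simp add: U_def field_simps)
  also have "\<dots> \<in> \<int>"
  proof -
    have "k2 * (lattice_step j2 / h) \<in> \<int>" "k1 * (lattice_step j1 / h) \<in> \<int>"
      unfolding h_def using m by (intro Ints_mult Ints_of_int lattice_step_div_Ints; simp)+
    then show ?thesis
      using frac[OF m(1)] frac[OF m(2)] by (metis Ints_diff)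
  qed
  finally have Z: "U / h + (f j1 + f j2) \<in> \<int>" .
  have "(1/2::real)^(m + 4) \<le> 1/16"
    by (rule half_power_add_4_le)
  then have "0 < f j1 + f j2" "f j1 + f j2 \<le> 1/8"
    using m by (auto simp: f_def)
  moreover have "0 \<le> U / h" "U / h < 1/2"
    using U h by (simp_all add: h_def divide_less_eq)
  ultimately show False
    using Ints_nonzero_abs_less1[OF Z] by simp
qed

lemma cantor_like_one_side_avoids_gaps:
  assumes s: "s > 0" and x: "x \<in> cantor_like t s"
    and r: "r > 0" "4 * r \<le> s * lattice_step J"
  shows "{x - r<..<x} \<inter> (\<Union>j\<le>J. gaps t s j) = {} \<or> {x<..<x + r} \<inter> (\<Union>j\<le>J. gaps t s j) = {}"
proof (rule ccontr)
  assume "\<not> ?thesis"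
  then obtain y1 j1 y2 j2 where y1: "y1 \<in> {x - r<..<x}" "y1 \<in> gaps t s j1" "j1 \<le> J"
    and y2: "y2 \<in> {x<..<x + r}" "y2 \<in> gaps t s j2" "j2 \<le> J"
    by blast
  obtain k1 :: int where k1: "\<bar>y1 - (t + k1 * (s * lattice_step j1))\<bar> < s * gap_radius j1"
    using y1(2) by (auto simp: mem_gaps_iff)
  obtain k2 :: int where k2: "\<bar>y2 - (t + k2 * (s * lattice_step j2))\<bar> < s * gap_radius j2"
    using y2(2) by (auto simp: mem_gaps_iff)
  have "s * gap_radius j1 \<le> \<bar>x - (t + k1 * (s * lattice_step j1))\<bar>"
       "s * gap_radius j2 \<le> \<bar>x - (t + k2 * (s * lattice_step j2))\<bar>"
    using x by (auto simp: cantor_like_def)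
  define U where "U = (k2 * lattice_step j2 - gap_radius j2) - (k1 * lattice_step j1 + gap_radius j1)"
  have "s * U = (t + k2 * (s * lattice_step j2) - s * gap_radius j2)
                - (t + k1 * (s * lattice_step j1) + s * gap_radius j1)"
    by (simp add: U_def algebra_simps)
  \<comment> \<open>the left gap ends in \<open>(x - r, x]\<close> and the right one starts in \<open>[x, x + r)\<close>\<close>
  then have sU: "0 \<le> s * U" "s * U < 2 * r"
    using k1 k2 y1(1) y2(1) \<open>s * gap_radius j1 \<le> _\<close> \<open>s * gap_radius j2 \<le> _\<close>
    by (auto simp: abs_less_iff abs_if split: if_splits)
  have "s * lattice_step J \<le> s * lattice_step (max j1 j2)"
    using s y1(3) y2(3) by (simp add: lattice_step_antimono)
  then have "0 \<le> s * U" "s * (2 * U) < s * lattice_step (max j1 j2)"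
    using sU r(2) by (simp_all add: algebra_simps)
  then have "0 \<le> U" "U < lattice_step (max j1 j2) / 2"
    using s by (simp_all add: zero_le_mult_iff)
  moreover have "j1 \<le> max j1 j2" "j2 \<le> max j1 j2" "j1 = max j1 j2 \<or> j2 = max j1 j2"
    by auto
  ultimately show False
    using gap_ends_apart[of j1 "max j1 j2" j2 k2 k1] by (simp add: U_def)
qed

lemma measure_diff_cantor_like_le:
  assumes s: "s > 0" and ab: "b - a = r" "r > 0"
    and avoid: "{a<..<b} \<inter> (\<Union>j\<le>J. gaps t s j) = {}"
    and J: "s * lattice_step (Suc J) < 4 * r" "n \<le> J"
  shows "measure lebesgue ({a<..<b} - cantor_like t s) \<le> (1/2)^n * r"
proof -
  have "{a<..<b} - cantor_like t s \<subseteq> {a<..<b} \<inter> (\<Union>i. gaps t s (Suc J + i))"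
  proof
    fix y assume y: "y \<in> {a<..<b} - cantor_like t s"
    then obtain j where j: "y \<in> gaps t s j"
      by (auto simp: cantor_like_eq)
    then have "Suc J \<le> j"
      using y avoid by (cases "j \<le> J") auto
    then show "y \<in> {a<..<b} \<inter> (\<Union>i. gaps t s (Suc J + i))"
      using j y by (auto intro!: exI[of _ "j - Suc J"])
  qed
  then have "measure lebesgue ({a<..<b} - cantor_like t s)
               \<le> measure lebesgue ({a<..<b} \<inter> (\<Union>i. gaps t s (Suc J + i)))"
    by (intro measure_mono_fmeasurable fmeasurableI2[OF lmeasurable_interval(2)])
      (auto simp: cantor_like_sets open_gaps)
  also have "\<dots> \<le> r * (1/2)^J / 8 + 6 * s * gap_radius (Suc J)"
    using measure_gaps_from_le[OF s, of a b t "Suc J"] ab by (simp add: power_add)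
  also have "\<dots> \<le> r * (1/2)^J / 8 + r * (1/2)^J * (3/4)"
  proof -
    have "6 * s * gap_radius (Suc J) = 6 * (s * lattice_step (Suc J)) * (1/2)^(J + 5)"
      by (simp add: gap_radius_eq ac_simps)
    also have "\<dots> \<le> 6 * (4 * r) * (1/2)^(J + 5)"
      using J(1) by (intro mult_right_mono mult_left_mono) auto
    also have "\<dots> = r * (1/2)^J * (3/4)"
      by (simp add: power_add power_one_over)
    finally show ?thesis by simp
  qed
  also have "\<dots> \<le> (1/2)^n * r"
  proof -
    have "r * (1/2::real)^J \<le> r * (1/2)^n"
      using J(2) ab(2) by (intro mult_left_mono power_decreasing) auto
    moreover have "0 \<le> r * (1/2::real)^J"
      using ab(2) by simp
    ultimately show ?thesis
      using mult.commute[of "(1/2::real)^n" r] by linarith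
  qed
  finally show ?thesis .
qed

text \<open>Choosing \<open>J\<close> with \<open>s * lattice_step (J + 1) < 4 r \<le> s * lattice_step J\<close>, one side of \<open>x\<close>
  misses the gaps of level at most \<open>J\<close>, and the deeper gaps are too sparse to matter.\<close>
lemma cantor_like_one_sided_density:
  assumes s: "s > 0" and x: "x \<in> cantor_like t s"
    and r: "r > 0" "r \<le> s * lattice_step n / 4"
  shows "measure lebesgue ({x - r<..<x} - cantor_like t s) \<le> (1/2)^n * r \<or>
         measure lebesgue ({x<..<x + r} - cantor_like t s) \<le> (1/2)^n * r"
proof -
  obtain N where N: "(1/2::real)^N < 4 * r / s"
    using real_arch_pow_inv[of "4 * r / s" "1/2::real"] r s by auto
  have "s * lattice_step (n + N) < 4 * r"
  proof -
    have "lattice_step (n + N) \<le> (1/2)^N"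
      by (rule order.trans[OF lattice_step_le]) (intro power_decreasing; simp)
    then have "s * lattice_step (n + N) < s * (4 * r / s)"
      using N s by (intro order.strict_trans1[OF mult_left_mono mult_strict_left_mono]) auto
    then show ?thesis
      using s by simp
  qed
  then obtain i where i: "4 * r \<le> s * lattice_step (n + i)" "s * lattice_step (Suc (n + i)) < 4 * r"
    using ex_least_nat_less[of "\<lambda>i. s * lattice_step (n + i) < 4 * r" N] r(2) by force
  from cantor_like_one_side_avoids_gaps[OF s x r(1) i(1)] show ?thesis
    by (elim disjE) (use measure_diff_cantor_like_le[OF s _ r(1) _ i(2)] in auto)
qed

section \<open>The example set\<close>

definition piece_center :: "nat \<Rightarrow> int \<Rightarrow> real" where
  "piece_center L k = (2 * k + 1) * (1/2)^(L + 1)"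

definition piece_width :: "nat \<Rightarrow> real" where
  "piece_width L = (1/2)^(2 * L + 4)"

definition piece :: "nat \<Rightarrow> int \<Rightarrow> real set" where
  "piece L k = cantor_like (piece_center L k) (piece_width L) \<inter>
     {piece_center L k - piece_width L / 2 .. piece_center L k + piece_width L / 2}"

definition example_set :: "real set" where
  "example_set = (\<Union>L. \<Union>k. piece L k)"

lemma piece_width_pos: "0 < piece_width L"
  by (simp add: piece_width_def)

lemma closed_piece: "closed (piece L k)"
  unfolding piece_def by (intro closed_Int closed_cantor_like closed_atLeastAtMost)

lemma piece_subset_interval:
  "piece L k \<subseteq> {piece_center L k - piece_width L / 2 .. piece_center L k + piece_width L / 2}"
  unfolding piece_def by (rule Int_lower2)

lemma piece_lmeasurable: "piece L k \<in> lmeasurable"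
  using closed_piece by (intro fmeasurableI2[OF lmeasurable_interval(1) piece_subset_interval]) simp

lemma fsigma_example_set: "fsigma_in euclideanreal example_set"
proof -
  have pieces: "fsigma_in euclideanreal (piece L k)" for L k
    using closed_piece closed_closedin closed_imp_fsigma_in by blast
  have "fsigma_in euclideanreal (\<Union>k. piece L k)" for L
    by (rule fsigma_in_Union) (auto simp: pieces)
  then show ?thesis
    unfolding example_set_def by (intro fsigma_in_Union) auto
qed

lemma example_set_sets: "example_set \<in> sets lebesgue"
  unfolding example_set_def using piece_lmeasurable by (intro sets.countable_UN'') auto

text \<open>The ends of the interval of a piece lie on the level-1 lattice
  (\<open>lattice_step 1 = 1/16\<close>), so they are centres of gaps.\<close>
lemma piece_margin:
  assumes "x \<in> piece L k"
  shows "piece_center L k - piece_width L / 2 + piece_width L * gap_radius 1 \<le> x \<and>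
         x \<le> piece_center L k + piece_width L / 2 - piece_width L * gap_radius 1"
proof -
  let ?c = "piece_center L k" and ?w = "piece_width L"
  have K: "?w * gap_radius 1 \<le> \<bar>x - (?c + k' * (?w * lattice_step 1))\<bar>" for k' :: int
    using assms by (auto simp: piece_def cantor_like_def)
  have step1: "lattice_step (Suc 0) = 1/16"
    by (simp add: lattice_step_def power_one_over)
  have "?w * gap_radius 1 \<le> \<bar>x - (?c + ?w / 2)\<bar>" "?w * gap_radius 1 \<le> \<bar>x - (?c - ?w / 2)\<bar>"
    using K[of 8] K[of "-8"] by (simp_all add: step1)
  moreover have "?c - ?w / 2 \<le> x" "x \<le> ?c + ?w / 2"
    using assms by (auto simp: piece_def)
  moreover have "0 < ?w * gap_radius 1"
    using piece_width_pos gap_radius_pos by simp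
  ultimately show ?thesis
    by (auto simp: abs_if split: if_splits)
qed

definition dens_level :: "nat \<Rightarrow> real" where
  "dens_level n = 1 - (1/2)^(n + 1)"

text \<open>\<open>dens_radius n\<close> suits every piece of generation at most \<open>n\<close>: it lies below the margin of
  \<open>piece_margin\<close> and below the scale at which \<open>cantor_like_one_sided_density\<close> yields the
  proportion \<open>2^-(n+1)\<close>.\<close>
definition dens_radius :: "nat \<Rightarrow> real" where
  "dens_radius n = piece_width n * lattice_step (n + 1) * gap_radius 1 / 4"

lemma piece_width_antimono: "L \<le> n \<Longrightarrow> piece_width n \<le> piece_width L"
  unfolding piece_width_def by (intro power_decreasing) auto

lemma lattice_step_le_1: "lattice_step j \<le> 1"
  unfolding lattice_step_def by (simp add: power_le_one)

lemma gap_radius_le_1: "gap_radius j \<le> 1"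
  unfolding gap_radius_def by (simp add: power_le_one)

lemma dens_radius_pos: "0 < dens_radius n"
  using piece_width_pos lattice_step_pos gap_radius_pos by (simp add: dens_radius_def)

lemma admissible_dens_level_radius: "admissible_seqs dens_level dens_radius"
  unfolding admissible_seqs_def
proof (intro conjI allI)
  fix n
  show "0 < dens_level n"
    using power_strict_decreasing[of 0 "n + 1" "1/2::real"] by (simp add: dens_level_def)
  show "0 < dens_radius n"
    by (rule dens_radius_pos)
next
  show "incseq dens_level"
    unfolding incseq_def dens_level_def by (auto intro!: power_decreasing)
  have "(\<lambda>n. (1/2::real)^(n + 1)) \<longlonglongrightarrow> 0"
    by (intro LIMSEQ_power_zero[THEN LIMSEQ_ignore_initial_segment, simplified]) simp
  from tendsto_diff[OF tendsto_const this] show "dens_level \<longlonglongrightarrow> 1"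
    by (simp add: dens_level_def[abs_def])
  show "decseq dens_radius"
    unfolding decseq_def
  proof (intro allI impI)
    fix m n :: nat assume "m \<le> n"
    then have "piece_width n * lattice_step (n + 1) \<le> piece_width m * lattice_step (m + 1)"
      using piece_width_pos[of m] lattice_step_pos[of "n + 1"]
      by (intro mult_mono piece_width_antimono lattice_step_antimono) auto
    then show "dens_radius n \<le> dens_radius m"
      using gap_radius_pos[of 1] by (simp add: dens_radius_def divide_right_mono)
  qed
  show "dens_radius \<longlonglongrightarrow> 0"
  proof (rule Lim_null_comparison)
    have "dens_radius n \<le> piece_width n" for n
    proof -
      have "lattice_step (n + 1) * gap_radius 1 \<le> 1"
        using lattice_step_le_1 gap_radius_le_1 lattice_step_pos gap_radius_pos
        by (intro mult_le_one) (auto intro: less_imp_le)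
      then show ?thesis
        using piece_width_pos[of n] by (simp add: dens_radius_def mult_left_le)
    qed
    then show "\<forall>\<^sub>F n in sequentially. norm (dens_radius n) \<le> piece_width n"
      using dens_radius_pos by (intro always_eventually) (simp add: less_imp_le)
    show "piece_width \<longlonglongrightarrow> 0"
      unfolding piece_width_def power_add power_mult
      by (intro tendsto_mult_left_zero LIMSEQ_power_zero) (simp add: power2_eq_square)
  qed
qed

lemma dens_radius_le:
  assumes n: "L \<le> n"
  shows "dens_radius n \<le> piece_width L * gap_radius 1"
    and "dens_radius n \<le> piece_width L * lattice_step (n + 1) / 4"
proof -
  have eq: "dens_radius n = (piece_width n * gap_radius 1) * (lattice_step (n + 1) / 4)"
           "dens_radius n = (piece_width n * lattice_step (n + 1) / 4) * gap_radius 1"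
    by (simp_all add: dens_radius_def)
  have bounds: "0 \<le> piece_width n * gap_radius 1" "0 \<le> piece_width n * lattice_step (n + 1) / 4"
       "0 \<le> lattice_step (n + 1) / 4" "lattice_step (n + 1) / 4 \<le> 1"
       "0 \<le> gap_radius 1" "gap_radius 1 \<le> 1"
    using piece_width_pos[of n] lattice_step_pos[of "n + 1"] gap_radius_pos[of 1]
      lattice_step_le_1[of "n + 1"] gap_radius_le_1[of 1] by simp_all
  have "dens_radius n \<le> piece_width n * gap_radius 1"
    unfolding eq(1) by (rule mult_right_le_one_le) (use bounds in auto)
  moreover have "dens_radius n \<le> piece_width n * lattice_step (n + 1) / 4"
    unfolding eq(2) by (rule mult_right_le_one_le) (use bounds in auto)
  moreover have "piece_width n * gap_radius 1 \<le> piece_width L * gap_radius 1"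
                "piece_width n * lattice_step (n + 1) / 4 \<le> piece_width L * lattice_step (n + 1) / 4"
    using piece_width_antimono[OF n] gap_radius_pos[of 1] lattice_step_pos[of "n + 1"]
    by (auto intro!: mult_right_mono divide_right_mono)
  ultimately show "dens_radius n \<le> piece_width L * gap_radius 1"
    and "dens_radius n \<le> piece_width L * lattice_step (n + 1) / 4"
    by linarith+
qed

lemma example_set_in_dens_set:
  assumes x: "x \<in> piece L k" and n: "L \<le> n"
  shows "x \<in> dens_set example_set (dens_level n) (dens_radius n)"
  unfolding dens_set_def
proof (intro CollectI ballI)
  fix r assume "r \<in> {0<..dens_radius n}"
  then have r: "0 < r" "r \<le> dens_radius n" by auto
  let ?c = "piece_center L k" and ?w = "piece_width L"
  let ?K = "cantor_like ?c ?w"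
  have r_le: "r \<le> ?w * gap_radius 1" "r \<le> ?w * lattice_step (n + 1) / 4"
    using r(2) dens_radius_le[OF n] by linarith+
  have side: "dens_level n \<le> measure lebesgue ({a<..<a + r} \<inter> example_set) / r"
    if a: "x - r \<le> a" "a \<le> x" and K: "measure lebesgue ({a<..<a + r} - ?K) \<le> (1/2)^(n + 1) * r"
    for a
  proof -
    have "{a<..<a + r} \<subseteq> {?c - ?w / 2 .. ?c + ?w / 2}"
      using piece_margin[OF x] a r_le(1) by auto
    then have "{a<..<a + r} - example_set \<subseteq> {a<..<a + r} - ?K"
      by (auto simp: example_set_def piece_def)
    then have "measure lebesgue ({a<..<a + r} - example_set) \<le> measure lebesgue ({a<..<a + r} - ?K)"
      using example_set_sets cantor_like_sets
      by (intro measure_mono_fmeasurable fmeasurableI2[OF lmeasurable_interval(2)]) auto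
    then show ?thesis
      using measure_interval_Int_ratio_ge[OF example_set_sets r(1)] K
      by (simp add: dens_level_def)
  qed
  have x_in: "x \<in> ?K"
    using x by (simp add: piece_def)
  from cantor_like_one_sided_density[OF piece_width_pos x_in r(1) r_le(2)]
  show "dens_level n \<le> max (measure lebesgue ({x - r<..<x} \<inter> example_set) / r)
                              (measure lebesgue ({x<..<x + r} \<inter> example_set) / r)"
    using side[of "x - r"] side[of x] r(1) by auto
qed

lemma SUDT_example_set: "SUDT example_set"
  unfolding SUDT_def
proof (intro conjI exI)
  show "example_set \<subseteq> (\<Union>m. \<Inter>n\<in>{m..}. dens_set example_set (dens_level n) (dens_radius n))"
    using example_set_in_dens_set by (fastforce simp: example_set_def)
qed (simp_all add: example_set_sets admissible_dens_level_radius)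

section \<open>Positive measure in intervals and holes at dyadic rationals\<close>

lemma measure_piece_pos: "0 < measure lebesgue (piece L k)"
proof -
  let ?c = "piece_center L k" and ?w = "piece_width L"
  define a where "a = ?c - ?w / 2"
  have w: "?w > 0" by (rule piece_width_pos)
  have "{a<..<a + ?w} - cantor_like ?c ?w \<subseteq> {a<..<a + ?w} \<inter> (\<Union>i. gaps ?c ?w (0 + i))"
    by (auto simp: cantor_like_eq)
  then have "measure lebesgue ({a<..<a + ?w} - cantor_like ?c ?w)
               \<le> measure lebesgue ({a<..<a + ?w} \<inter> (\<Union>i. gaps ?c ?w (0 + i)))"
    by (intro measure_mono_fmeasurable fmeasurableI2[OF lmeasurable_interval(2)])
      (auto simp: cantor_like_sets open_gaps)
  also have "\<dots> \<le> ?w / 4 + 6 * ?w * gap_radius 0"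
    using measure_gaps_from_le[OF w, of a "a + ?w" ?c 0] w by simp
  also have "\<dots> = 5/8 * ?w"
    by (simp add: gap_radius_def power2_eq_square power_one_over)
  finally have "1 - 5/8 \<le> measure lebesgue ({a<..<a + ?w} \<inter> cantor_like ?c ?w) / ?w"
    by (intro measure_interval_Int_ratio_ge[OF cantor_like_sets w]) simp
  moreover have "{a<..<a + ?w} \<inter> cantor_like ?c ?w \<subseteq> piece L k"
    by (auto simp: piece_def a_def)
  then have "measure lebesgue ({a<..<a + ?w} \<inter> cantor_like ?c ?w) \<le> measure lebesgue (piece L k)"
    by (intro measure_mono_fmeasurable piece_lmeasurable) (auto simp: cantor_like_sets)
  ultimately show ?thesis
    using w by (simp add: field_simps)
qed

lemma int_multiple_between:
  fixes a u :: real
  assumes u: "0 < u"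
  shows "\<exists>k::int. a < k * u \<and> k * u \<le> a + u"
proof -
  have "a / u < of_int (\<lfloor>a / u\<rfloor> + 1)" "of_int (\<lfloor>a / u\<rfloor> + 1) \<le> a / u + 1"
    using floor_correct[of "a / u"] by simp_all
  then have "a < of_int (\<lfloor>a / u\<rfloor> + 1) * u" "of_int (\<lfloor>a / u\<rfloor> + 1) * u \<le> a + u"
    using u by (simp_all add: field_simps)
  then show ?thesis by blast
qed

lemma example_set_Int_interval_pos:
  assumes ab: "a < b"
  shows "0 < measure lebesgue (example_set \<inter> {a<..<b})"
proof -
  obtain L where L: "(1/2::real)^L < (b - a) / 4"
    using real_arch_pow_inv[of "(b - a) / 4" "1/2::real"] ab by auto
  define u :: real where "u = (1/2)^L"
  obtain k :: int where k: "a < k * u" "k * u \<le> a + u"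
    using int_multiple_between[of u a] by (auto simp: u_def)
  have "piece_center L k = k * u + u / 2"
    by (simp add: piece_center_def u_def algebra_simps)
  moreover have "piece_width L \<le> u"
    unfolding piece_width_def u_def by (intro power_decreasing) auto
  ultimately have "piece L k \<subseteq> example_set \<inter> {a<..<b}"
    using piece_subset_interval[of L k] k L piece_width_pos[of L]
    by (auto simp: example_set_def u_def)
  then have "measure lebesgue (piece L k) \<le> measure lebesgue (example_set \<inter> {a<..<b})"
    using example_set_sets fmeasurableD[OF piece_lmeasurable]
    by (intro measure_mono_fmeasurable fmeasurableI2[OF lmeasurable_interval(2)]) auto
  then show ?thesis
    using measure_piece_pos[of L k] by linarith
qed

lemma two_power_diff_mult_half_power: "a \<le> N \<Longrightarrow> (2::real)^(N - a) * (1/2)^N = (1/2)^a"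
  by (simp add: power_one_over power_diff)

text \<open>Every gap lattice \<open>c + w * lattice_step j * \<int>\<close> of a piece of generation \<open>L\<close> is the
  dyadic lattice \<open>2^-N * \<int>\<close> with \<open>N = 2L + 4 + j^2 + 3j\<close>; for \<open>j = M\<close> it contains the
  dyadic rational, which is therefore the centre of a gap.\<close>
lemma dyadic_notin_piece:
  fixes m :: int
  shows "m * (1/2)^M \<notin> piece L k"
proof
  assume "m * (1/2)^M \<in> piece L k"
  then have K: "m * (1/2)^M \<in> cantor_like (piece_center L k) (piece_width L)"
    by (simp add: piece_def)
  define N where "N = 2 * L + 4 + (M * M + 3 * M)"
  define k' :: int where "k' = m * 2^(N - M) - (2 * k + 1) * 2^(N - (L + 1))"
  have "piece_width L * lattice_step M = (1/2)^N"
    by (simp add: piece_width_def lattice_step_def N_def power_add)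
  then have "piece_center L k + k' * (piece_width L * lattice_step M) = m * (1/2)^M"
    using two_power_diff_mult_half_power[of M N] two_power_diff_mult_half_power[of "L + 1" N]
    by (simp add: k'_def piece_center_def N_def algebra_simps)
  moreover have "piece_width L * gap_radius M
      \<le> \<bar>m * (1/2)^M - (piece_center L k + k' * (piece_width L * lattice_step M))\<bar>"
    using K by (simp add: cantor_like_def)
  ultimately show False
    using mult_pos_pos[OF piece_width_pos gap_radius_pos, of L M] by simp
qed

lemma piece_center_dist_dyadic:
  fixes m :: int
  assumes "M < L"
  shows "(1/2)^L / 2 \<le> \<bar>piece_center L k - m * (1/2)^M\<bar>"
proof -
  define z :: int where "z = 2 * k + 1 - m * 2^(L + 1 - M)"
  have eq: "piece_center L k - m * (1/2)^M = z * (1/2)^(L + 1)"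
    using two_power_diff_mult_half_power[of M "L + 1"] assms
    by (simp add: z_def piece_center_def algebra_simps)
  have "z \<noteq> 0"
  proof -
    have "L + 1 - M = Suc (L - M)"
      using assms by simp
    then have "z = 2 * (k - m * 2^(L - M)) + 1"
      by (simp add: z_def algebra_simps)
    then show ?thesis by presburger
  qed
  then have "1 \<le> \<bar>real_of_int z\<bar>"
    by linarith
  have "(1/2)^L / 2 = 1 * (1/2::real)^(L + 1)"
    by simp
  also have "\<dots> \<le> \<bar>real_of_int z\<bar> * (1/2)^(L + 1)"
    using \<open>1 \<le> \<bar>real_of_int z\<bar>\<close> by (intro mult_right_mono) auto
  also have "\<dots> = \<bar>piece_center L k - m * (1/2)^M\<bar>"
    by (simp add: eq abs_mult)
  finally show ?thesis .
qed

lemma piece_dist_center_le: "y \<in> piece L k \<Longrightarrow> \<bar>y - piece_center L k\<bar> \<le> piece_width L / 2"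
  using piece_subset_interval[of L k] by (intro abs_leI) auto

lemma piece_width_le: "piece_width L \<le> 1/16"
proof -
  have "(1/2::real)^(2 * L + 4) \<le> (1/2)^4"
    by (intro power_decreasing) auto
  then show ?thesis
    by (simp add: piece_width_def power_one_over)
qed

lemma measure_pieces_near_dyadic_le:
  fixes m :: int
  assumes lt: "M < L" and r: "0 < r" and d: "d = m * (1/2)^M"
  shows "measure lebesgue ({d - r<..<d + r} \<inter> (\<Union>k. piece L k)) \<le> r * (1/2)^L"
proof -
  define p :: real where "p = (1/2)^L"
  have p: "0 < p" "p \<le> 1"
    by (simp_all add: p_def power_le_one)
  have w: "piece_width L = p^2 / 16"
    by (simp add: piece_width_def p_def power_add power_mult_distrib[symmetric] power_mult[symmetric]
        mult.commute power_one_over)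
  have "p^2 \<le> p"
    using p by (simp add: power2_eq_square mult_le_cancel_left1)
  show ?thesis
  proof (cases "r \<le> p / 4")
    case True
    have far: "r \<le> \<bar>y - d\<bar>" if "y \<in> piece L k" for y k
      using piece_dist_center_le[OF that] piece_center_dist_dyadic[OF lt, of k m] True
        \<open>p^2 \<le> p\<close> by (simp add: d p_def w abs_if split: if_splits)
    have "y \<notin> piece L k" if "y \<in> {d - r<..<d + r}" for y k
      using that far[of y k] by (auto simp: abs_if split: if_splits)
    then have "{d - r<..<d + r} \<inter> (\<Union>k. piece L k) = {}"
      by blast
    then show ?thesis
      using r p by (simp add: p_def)
  next
    case False
    have "measure lebesgue ({d - r<..<d + r} \<inter> (\<Union>k. piece L k))
            \<le> ((d + r - (d - r) + 2 * (p^2 / 32)) / p + 1) * (2 * (p^2 / 32))"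
    proof (rule measure_Int_lattice_union_le[where t = "p / 2"])
      fix k
      have c: "piece_center L k = p / 2 + k * p" and hw: "piece_width L / 2 = p^2 / 32"
        by (simp_all add: piece_center_def p_def w algebra_simps)
      show "piece L k \<subseteq> {p / 2 + k * p - p^2 / 32 .. p / 2 + k * p + p^2 / 32}"
        using piece_subset_interval[of L k] unfolding c hw .
    qed (use p r piece_lmeasurable in auto)
    also have "\<dots> = r * p / 8 + p^3 / 256 + p^2 / 16"
      using p by (simp add: field_simps power2_eq_square power3_eq_cube)
    also have "\<dots> \<le> r * p"
    proof -
      have "p^3 \<le> p^2"
        using p by (simp add: power3_eq_cube power2_eq_square mult_le_cancel_left1)
      moreover have "p^2 \<le> 4 * (r * p)"
        using False p by (simp add: power2_eq_square)
      ultimately show ?thesis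
        using mult_pos_pos[OF r p(1)] by linarith
    qed
    finally show ?thesis
      by (simp add: p_def)
  qed
qed

lemma piece_near_center:
  assumes "y \<in> piece L k"
  shows "\<bar>y - piece_center L k\<bar> \<le> 1/32"
  using piece_dist_center_le[OF assms] piece_width_le[of L] by linarith

lemma finite_pieces_near: "finite {k::int. \<bar>piece_center L k - d\<bar> \<le> 1}"
proof (rule finite_subset[OF _ finite_atLeastAtMost_int])
  define p :: real where "p = (1/2)^(L + 1)"
  have p: "p > 0" by (simp add: p_def)
  show "{k::int. \<bar>piece_center L k - d\<bar> \<le> 1}
          \<subseteq> {\<lceil>((d - 1) / p - 1) / 2\<rceil> .. \<lfloor>((d + 1) / p - 1) / 2\<rfloor>}"
  proof
    fix k :: int assume "k \<in> {k. \<bar>piece_center L k - d\<bar> \<le> 1}"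
    then have "d - 1 \<le> (2 * k + 1) * p" "(2 * k + 1) * p \<le> d + 1"
      by (auto simp: piece_center_def p_def abs_le_iff)
    then have "((d - 1) / p - 1) / 2 \<le> k" "k \<le> ((d + 1) / p - 1) / 2"
      using p by (simp_all add: field_simps)
    then show "k \<in> {\<lceil>((d - 1) / p - 1) / 2\<rceil> .. \<lfloor>((d + 1) / p - 1) / 2\<rfloor>}"
      by (simp add: ceiling_le_iff le_floor_iff)
  qed
qed

text \<open>Only finitely many pieces of generation at most \<open>M\<close> come near a dyadic rational of
  level \<open>M\<close>, and none contains it.\<close>
lemma dyadic_far_from_coarse_pieces:
  fixes m :: int
  shows "\<exists>e>0. \<forall>L\<le>M. \<forall>k. \<forall>y\<in>piece L k. e \<le> \<bar>y - m * (1/2)^M\<bar>"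
proof -
  define d :: real where "d = m * (1/2)^M"
  define F where "F = (\<Union>L\<in>{..M}. \<Union>k\<in>{k. \<bar>piece_center L k - d\<bar> \<le> 1}. piece L k)"
  have "closed F"
    unfolding F_def by (intro closed_UN finite_pieces_near ballI closed_piece) auto
  moreover have "d \<notin> F"
    using dyadic_notin_piece by (auto simp: F_def d_def)
  ultimately obtain e where e: "e > 0" "ball d e \<subseteq> - F"
    using open_contains_ball[of "- F"] by (auto simp: closed_def)
  have "min e (1/2) \<le> \<bar>y - d\<bar>" if "L \<le> M" "y \<in> piece L k" for L k y
  proof (cases "\<bar>piece_center L k - d\<bar> \<le> 1")
    case True
    then have "y \<notin> ball d e"
      using e that by (auto simp: F_def)
    then show ?thesis
      by (simp add: dist_real_def abs_minus_commute)
  next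
    case False
    then show ?thesis
      using piece_near_center[OF that(2)] by linarith
  qed
  then show ?thesis
    using e(1) by (intro exI[of _ "min e (1/2)"]) (auto simp: d_def)
qed

lemma example_set_sparse_near_dyadic:
  fixes m :: int
  assumes M: "1 \<le> M"
  shows "\<exists>r0>0. \<forall>r\<in>{0<..r0}.
           measure lebesgue (example_set \<inter> {m * (1/2)^M - r<..<m * (1/2)^M + r}) \<le> r / 2"
proof -
  define d :: real where "d = m * (1/2)^M"
  obtain e where e: "e > 0" and far: "\<And>L k y. L \<le> M \<Longrightarrow> y \<in> piece L k \<Longrightarrow> e \<le> \<bar>y - d\<bar>"
    using dyadic_far_from_coarse_pieces[of M m] by (auto simp: d_def)
  have "measure lebesgue (example_set \<inter> {d - r<..<d + r}) \<le> r / 2" if r: "0 < r" "r \<le> e" for r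
  proof -
    define W where "W = {d - r<..<d + r}"
    define A where "A i = W \<inter> (\<Union>k. piece (Suc M + i) k)" for i
    have A: "A i \<in> lmeasurable" for i
      unfolding A_def W_def using piece_lmeasurable
      by (intro fmeasurableI2[OF lmeasurable_interval(2)] sets.Int sets.countable_UN'') auto
    have "example_set \<inter> W \<subseteq> (\<Union>i. A i)"
    proof
      fix y assume y: "y \<in> example_set \<inter> W"
      then obtain L k where yL: "y \<in> piece L k"
        by (auto simp: example_set_def)
      have "\<bar>y - d\<bar> < e"
        using y r by (auto simp: W_def abs_less_iff)
      then have "Suc M \<le> L"
        using far[OF _ yL] by (meson not_less_eq_eq not_le)
      then show "y \<in> (\<Union>i. A i)"
        using y yL by (auto simp: A_def intro!: exI[of _ "L - Suc M"])
    qed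
    moreover have "(\<Union>i. A i) \<in> lmeasurable"
    proof (rule fmeasurableI2[of W])
      show "W \<in> lmeasurable" "(\<Union>i. A i) \<subseteq> W"
        by (auto simp: W_def A_def)
      show "(\<Union>i. A i) \<in> sets lebesgue"
        using A by (intro sets.countable_UN) (auto intro: fmeasurableD)
    qed
    ultimately have "measure lebesgue (example_set \<inter> W) \<le> measure lebesgue (\<Union>i. A i)"
      using example_set_sets by (intro measure_mono_fmeasurable) (auto simp: W_def)
    also have "\<dots> \<le> 2 * (r * (1/2)^(Suc M))"
    proof (rule measure_UN_geometric_le[OF A])
      fix i
      show "measure lebesgue (A i) \<le> r * (1/2)^(Suc M) * (1/2)^i"
        using measure_pieces_near_dyadic_le[of M "Suc M + i" r d m] r
        by (simp add: A_def W_def d_def power_add mult.assoc)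
    qed
    also have "\<dots> \<le> r / 2"
      using M r power_decreasing[of 1 M "1/2::real"] by simp
    finally show ?thesis
      by (simp add: W_def)
  qed
  then show ?thesis
    using e by (auto simp: d_def)
qed

lemma dyadic_between:
  assumes ab: "a < b"
  shows "\<exists>M\<ge>1. \<exists>m::int. a < m * (1/2)^M \<and> m * (1/2)^M < b"
proof -
  obtain M0 where "(1/2::real)^M0 < b - a"
    using real_arch_pow_inv[of "b - a" "1/2::real"] ab by auto
  moreover have "(1/2::real)^(Suc M0) \<le> (1/2)^M0"
    by (intro power_decreasing) auto
  ultimately have M: "(1/2::real)^(Suc M0) < b - a"
    by linarith
  obtain m :: int where "a < m * (1/2)^(Suc M0)" "m * (1/2)^(Suc M0) \<le> a + (1/2)^(Suc M0)"
    using int_multiple_between[of "(1/2)^(Suc M0)" a] by auto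
  then show ?thesis
    using M by (intro exI[of _ "Suc M0"]) auto
qed

lemma example_set_dense_holes:
  assumes "a < b"
  shows "\<exists>d\<in>{a<..<b}. \<exists>r0>0. \<forall>r\<in>{0<..r0}.
           measure lebesgue (example_set \<inter> {d - r<..<d + r}) \<le> r / 2"
  using dyadic_between[OF assms] example_set_sparse_near_dyadic by fastforce

theorem theorem1p4:
  shows "\<exists>E :: real set. fsigma_in euclideanreal E \<and> SUDT E \<and>
     (\<forall>E'. gdelta_in euclideanreal E' \<and> emeasure lebesgue ((E - E') \<union> (E' - E)) = 0
        \<longrightarrow> \<not> UDT E')"
proof (intro exI[of _ example_set] conjI allI impI)
  show "fsigma_in euclideanreal example_set"
    by (rule fsigma_example_set)
  show "SUDT example_set"
    by (rule SUDT_example_set)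
  fix E' assume "gdelta_in euclideanreal E' \<and> emeasure lebesgue ((example_set - E') \<union> (E' - example_set)) = 0"
  then show "\<not> UDT E'"
    using not_UDT_if_dense_holes[OF example_set_sets example_set_Int_interval_pos example_set_dense_holes]
    by blast
qed

end
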